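(* Let $p\ge3$ be a prime, let $c_1,c_2\in(0,1/2]$, and let $D_1,D_2$ be probability distributions on $\mathbb{F}_p$ with $D_i(x)\le1-c_i$ for all $x\in\mathbb{F}_p$ and $i=1,2$. Let $\epsilon>0$, let $n_1,n_2$ be positive integers, and let $b:\mathbb{F}_p^{n_1}\times\mathbb{F}_p^{n_2}\to\mathbb{F}_p$ be a bilinear form with $|\mathrm{bias}_{t,(D_1,D_2)}b|\ge\epsilon$ for some $t\in\mathbb{F}_p^*$. Then $b$ has rank at most $K_{p,c_1,c_2}(\epsilon)=2c_1^{-1}c_2^{-1}\pi^{-2}p^2\log(2ep/c_1)\log(3/\epsilon)$.
   Context: $\omega_p=\exp(2\pi i/p)$. $\mathrm{bias}_{t,(D_1,D_2)}b=\mathbb{E}_{x\sim D_1^{n_1},\,y\sim D_2^{n_2}}\omega_p^{t\,b(x,y)}$, with product distributions having independent coordinates. The rank of $b$ is the rank of its coefficient matrix. *)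

theory Defs
  imports Complex_Main "HOL-Probability.Probability_Mass_Function"
    "Jordan_Normal_Form.DL_Rank" "Berlekamp_Zassenhaus.Finite_Field"
begin

text \<open>F_p is the type 'p mod_ring with 'p of prime cardinality p = CARD('p).
  Elements of F_p^n are functions {..<n} -> F_p (extensional).
  A bilinear form b on F_p^n1 x F_p^n2 is given by its coefficient matrix B
  (an n1 x n2 matrix over F_p): b(x,y) = sum_i sum_j x_i B_ij y_j.\<close>

definition bil_form :: "'p::prime_card mod_ring mat \<Rightarrow> (nat \<Rightarrow> 'p mod_ring) \<Rightarrow> (nat \<Rightarrow> 'p mod_ring) \<Rightarrow> 'p mod_ring" where
  "bil_form B x y = (\<Sum>i<dim_row B. \<Sum>j<dim_col B. x i * B $$ (i, j) * y j)"

definition omega_pow :: "'p::prime_card mod_ring \<Rightarrow> complex" where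
  "omega_pow a = cis (2 * pi * real_of_int (to_int_mod_ring a) / real CARD('p))"

text \<open>bias_{t,(D1,D2)} b = E_{x ~ D1^n1, y ~ D2^n2} omega_p^{t b(x,y)}, with
  product distributions (independent coordinates).\<close>
definition bias :: "'p::prime_card mod_ring \<Rightarrow> 'p mod_ring pmf \<Rightarrow> 'p mod_ring pmf \<Rightarrow> 'p mod_ring mat \<Rightarrow> complex" where
  "bias t D1 D2 B =
     (\<Sum>x\<in>PiE {..<dim_row B} (\<lambda>_. UNIV). \<Sum>y\<in>PiE {..<dim_col B} (\<lambda>_. UNIV).
        complex_of_real ((\<Prod>i<dim_row B. pmf D1 (x i)) * (\<Prod>j<dim_col B. pmf D2 (y j)))
        * omega_pow (t * bil_form B x y))"

definition bil_rank :: "'p::prime_card mod_ring mat \<Rightarrow> nat" where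
  "bil_rank B = vec_space.rank (dim_row B) B"

end

(*
  Summing over y first, the bias is E_x prod_j F (t (xB)_j), where F s = sum_v D2 v omega_p^(s v)
  is the Fourier transform of D2. As D2 is not concentrated, |F s|^2 <= 1 - c2 (1 - cos (2 pi/p))
  for s <> 0, so |bias| <= E_x exp (-A N x) with A = c2 (1 - cos (2 pi/p)) / 2, where N x counts
  the nonzero values among r = rank B linearly independent forms (xB)_j. As D1 is not
  concentrated, Gaussian elimination shows that these r forms take any prescribed value with
  probability at most (1 - c1)^r, whence E_x lambda^(N x) <= ((1 - c1) (1 + (p - 1) lambda))^r.
  Splitting exp (-A N) <= exp (-A kappa) + lambda^(N - kappa) and taking kappa and lambda
  proportional to r bounds both terms by exp (-A beta r), so eps <= 2 exp (-A beta r).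
*)

theory Submission
  imports Defs "HOL-Analysis.Complex_Transcendental"
begin

lemma omega_pow_add:
  fixes a b :: "'p::prime_card mod_ring"
  shows "omega_pow (a + b) = omega_pow a * omega_pow b"
proof -
  let ?p = "int CARD('p)"
  let ?x = "to_int_mod_ring a + to_int_mod_ring b"
  have "omega_pow (a + b) = cis (2 * pi * real_of_int (?x mod ?p) / real CARD('p))"
    unfolding omega_pow_def to_int_mod_ring_add by simp
  also have "?x mod ?p = ?x - ?p * (?x div ?p)"
    by (simp add: minus_div_mult_eq_mod[symmetric] algebra_simps)
  also have "cis (2 * pi * real_of_int (?x - ?p * (?x div ?p)) / real CARD('p))
      = cis (2 * pi * real_of_int ?x / real CARD('p) - 2 * pi * real_of_int (?x div ?p))"
    by (simp add: field_simps)
  also have "\<dots> = cis (2 * pi * real_of_int ?x / real CARD('p))"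
    by (simp add: cis_divide[symmetric])
  also have "\<dots> = omega_pow a * omega_pow b"
    unfolding omega_pow_def cis_mult by (simp add: field_simps)
  finally show ?thesis .
qed

lemma omega_pow_zero [simp]: "omega_pow (0::'p::prime_card mod_ring) = 1"
  unfolding omega_pow_def by simp

lemma norm_omega_pow [simp]: "norm (omega_pow (a::'p::prime_card mod_ring)) = 1"
  unfolding omega_pow_def by simp

lemma omega_pow_sum:
  fixes f :: "'b \<Rightarrow> 'p::prime_card mod_ring"
  shows "omega_pow (sum f S) = (\<Prod>i\<in>S. omega_pow (f i))"
  by (induction S rule: infinite_finite_induct) (auto simp: omega_pow_add)

lemma omega_pow_uminus: "omega_pow (- a) = cnj (omega_pow (a::'p::prime_card mod_ring))"
proof -
  have "omega_pow (- a) * omega_pow a = 1"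
    by (simp flip: omega_pow_add)
  moreover have "cnj (omega_pow a) * omega_pow a = 1"
    using complex_norm_square[of "omega_pow a"] by (simp add: mult.commute)
  moreover have "omega_pow a \<noteq> 0"
    using norm_omega_pow[of a] by (metis norm_zero zero_neq_one)
  ultimately show ?thesis by (metis mult_right_cancel)
qed

lemma cos_2pi_mult_div_le:
  fixes k p :: int
  assumes "1 \<le> k" "k \<le> p - 1"
  shows "cos (2 * pi * k / p) \<le> cos (2 * pi / p)"
proof (cases "2 * k \<le> p")
  case True
  show ?thesis
    by (rule cos_monotone_0_pi_le) (use assms True in \<open>auto simp: field_simps\<close>)
next
  case False
  have "2 * pi * (1 + k) \<le> 2 * pi * p"
    by (intro mult_left_mono) (use assms in auto)
  moreover have "cos (2 * pi * k / p) = cos (2 * pi * (p - k) / p)"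
    using cos_2pi_minus[of "2 * pi * (p - k) / p"] assms by (simp add: field_simps)
  ultimately show ?thesis
    using cos_monotone_0_pi_le[of "2 * pi / p" "2 * pi * (p - k) / p"] assms False
    by (auto simp: field_simps)
qed

lemma Re_omega_pow_le:
  fixes u :: "'p::prime_card mod_ring"
  assumes "u \<noteq> 0"
  shows "Re (omega_pow u) \<le> cos (2 * pi / real CARD('p))"
proof -
  have "to_int_mod_ring u \<in> {0..<int CARD('p)}"
    using range_to_int_mod_ring by blast
  moreover have "to_int_mod_ring u \<noteq> 0"
    using assms by (metis to_int_mod_ring_hom.hom_zero to_int_mod_ring_hom.injectivity)
  ultimately have "1 \<le> to_int_mod_ring u" "to_int_mod_ring u \<le> int CARD('p) - 1"
    unfolding atLeastLessThan_iff by linarith+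
  from cos_2pi_mult_div_le[OF this] show ?thesis
    unfolding omega_pow_def by simp
qed

definition pmf_fourier :: "'p::prime_card mod_ring pmf \<Rightarrow> 'p mod_ring \<Rightarrow> complex" where
  "pmf_fourier D s = (\<Sum>v\<in>UNIV. complex_of_real (pmf D v) * omega_pow (s * v))"

lemma sum_pmf_UNIV: "(\<Sum>v\<in>UNIV. pmf (D::'a::finite pmf) v) = 1"
  by (rule sum_pmf_eq_1) auto

lemma sum_pmf_squared_le:
  fixes D :: "'a::finite pmf"
  assumes "\<And>x. pmf D x \<le> q"
  shows "(\<Sum>v\<in>UNIV. (pmf D v)\<^sup>2) \<le> q"
proof -
  have "(\<Sum>v\<in>UNIV. (pmf D v)\<^sup>2) \<le> (\<Sum>v\<in>UNIV. pmf D v * q)"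
    by (intro sum_mono) (simp add: power2_eq_square mult_left_mono assms)
  then show ?thesis
    by (simp add: sum_distrib_right[symmetric] sum_pmf_UNIV)
qed

lemma norm_pmf_fourier_le_1: "norm (pmf_fourier D s) \<le> 1"
proof -
  have "norm (pmf_fourier D s) \<le> (\<Sum>v\<in>UNIV. norm (complex_of_real (pmf D v) * omega_pow (s * v)))"
    unfolding pmf_fourier_def by (rule norm_sum)
  then show ?thesis
    by (simp add: norm_mult sum_pmf_UNIV)
qed

lemma norm_pmf_fourier_squared:
  "(norm (pmf_fourier D s))\<^sup>2
    = (\<Sum>v\<in>UNIV. \<Sum>w\<in>UNIV. pmf D v * pmf D w * Re (omega_pow (s * (v - w))))"
proof -
  have "complex_of_real ((norm (pmf_fourier D s))\<^sup>2) = pmf_fourier D s * cnj (pmf_fourier D s)"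
    by (rule complex_norm_square)
  also have "\<dots> = (\<Sum>v\<in>UNIV. \<Sum>w\<in>UNIV.
      complex_of_real (pmf D v * pmf D w) * omega_pow (s * (v - w)))"
    unfolding pmf_fourier_def cnj_sum sum_product
  proof (intro sum.cong refl)
    fix v w :: "'a mod_ring"
    have "omega_pow (s * v) * cnj (omega_pow (s * w)) = omega_pow (s * v + - (s * w))"
      by (simp only: omega_pow_add omega_pow_uminus)
    then show "complex_of_real (pmf D v) * omega_pow (s * v)
        * cnj (complex_of_real (pmf D w) * omega_pow (s * w))
      = complex_of_real (pmf D v * pmf D w) * omega_pow (s * (v - w))"
      by (simp add: algebra_simps)
  qed
  finally have "(norm (pmf_fourier D s))\<^sup>2 = Re (\<Sum>v\<in>UNIV. \<Sum>w\<in>UNIV.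
      complex_of_real (pmf D v * pmf D w) * omega_pow (s * (v - w)))"
    by (metis Re_complex_of_real)
  then show ?thesis
    by (simp only: Re_sum) simp
qed

lemma norm_pmf_fourier_squared_le:
  fixes D :: "'p::prime_card mod_ring pmf"
  assumes "s \<noteq> 0" and "\<And>x. pmf D x \<le> 1 - c"
  shows "(norm (pmf_fourier D s))\<^sup>2 \<le> 1 - c * (1 - cos (2 * pi / real CARD('p)))"
proof -
  define \<theta> where "\<theta> = cos (2 * pi / real CARD('p))"
  have Re_le: "Re (omega_pow (s * (v - w))) \<le> \<theta> + (if w = v then 1 - \<theta> else 0)" for v w
    using Re_omega_pow_le[of "s * (v - w)"] assms(1) unfolding \<theta>_def by auto
  have "(norm (pmf_fourier D s))\<^sup>2
      \<le> (\<Sum>v\<in>UNIV. \<Sum>w\<in>UNIV. pmf D v * pmf D w * (\<theta> + (if w = v then 1 - \<theta> else 0)))"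
    unfolding norm_pmf_fourier_squared by (intro sum_mono mult_left_mono Re_le) auto
  also have "\<dots> = (\<Sum>v\<in>UNIV. \<theta> * pmf D v + (1 - \<theta>) * (pmf D v)\<^sup>2)"
  proof (intro sum.cong refl)
    fix v
    have "(\<Sum>w\<in>UNIV. pmf D v * pmf D w * (\<theta> + (if w = v then 1 - \<theta> else 0)))
        = (\<Sum>w\<in>UNIV. \<theta> * pmf D v * pmf D w) + (\<Sum>w\<in>UNIV. if w = v then (1 - \<theta>) * (pmf D v)\<^sup>2 else 0)"
      by (subst sum.distrib[symmetric]) (intro sum.cong; simp add: algebra_simps power2_eq_square)
    then show "(\<Sum>w\<in>UNIV. pmf D v * pmf D w * (\<theta> + (if w = v then 1 - \<theta> else 0)))
        = \<theta> * pmf D v + (1 - \<theta>) * (pmf D v)\<^sup>2"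
      by (simp add: sum_distrib_left[symmetric] sum_pmf_UNIV)
  qed
  also have "\<dots> = \<theta> + (1 - \<theta>) * (\<Sum>v\<in>UNIV. (pmf D v)\<^sup>2)"
    by (simp add: sum.distrib sum_distrib_left[symmetric] sum_pmf_UNIV)
  also have "\<dots> \<le> \<theta> + (1 - \<theta>) * (1 - c)"
    unfolding \<theta>_def by (intro add_left_mono mult_left_mono sum_pmf_squared_le assms(2)) simp
  finally show ?thesis
    unfolding \<theta>_def by (simp add: algebra_simps)
qed

lemma norm_pmf_fourier_le_exp:
  fixes D :: "'p::prime_card mod_ring pmf"
  assumes "s \<noteq> 0" and "\<And>x. pmf D x \<le> 1 - c"
  shows "norm (pmf_fourier D s) \<le> exp (- (c * (1 - cos (2 * pi / real CARD('p)))) / 2)"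
proof -
  let ?x = "c * (1 - cos (2 * pi / real CARD('p)))"
  have "(norm (pmf_fourier D s))\<^sup>2 \<le> 1 - ?x"
    by (rule norm_pmf_fourier_squared_le[OF assms])
  also have "\<dots> \<le> exp (- ?x)"
    using exp_ge_add_one_self[of "- ?x"] by simp
  also have "\<dots> = (exp (- ?x / 2))\<^sup>2"
    by (simp flip: exp_double)
  finally show ?thesis
    by (rule power2_le_imp_le) simp
qed

lemma bil_form_eq_sum_cols:
  assumes "B \<in> carrier_mat n1 n2"
  shows "bil_form B x y = (\<Sum>j<n2. (\<Sum>i<n1. x i * B $$ (i, j)) * y j)"
  using assms unfolding bil_form_def
  by (simp add: sum.swap[of _ "{..<n1}"] sum_distrib_right)

lemma bias_eq_sum_prod_pmf_fourier:
  fixes D1 D2 :: "'p::prime_card mod_ring pmf"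
  assumes "B \<in> carrier_mat n1 n2"
  shows "bias t D1 D2 B = (\<Sum>x\<in>PiE {..<n1} (\<lambda>_. UNIV). complex_of_real (\<Prod>i<n1. pmf D1 (x i))
      * (\<Prod>j<n2. pmf_fourier D2 (t * (\<Sum>i<n1. x i * B $$ (i, j)))))"
proof -
  have average_y: "(\<Sum>y\<in>PiE {..<n2} (\<lambda>_. UNIV).
      complex_of_real (\<Prod>j<n2. pmf D2 (y j)) * omega_pow (t * bil_form B x y))
    = (\<Prod>j<n2. pmf_fourier D2 (t * w j))" if w: "w = (\<lambda>j. \<Sum>i<n1. x i * B $$ (i, j))" for x w
  proof -
    have "bil_form B x y = (\<Sum>j<n2. w j * y j)" for y
      unfolding bil_form_eq_sum_cols[OF assms] w ..
    then have "t * bil_form B x y = (\<Sum>j<n2. t * w j * y j)" for y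
      by (simp add: sum_distrib_left mult.assoc)
    then have "omega_pow (t * bil_form B x y) = (\<Prod>j<n2. omega_pow (t * w j * y j))" for y
      by (simp add: omega_pow_sum)
    then have "(\<Sum>y\<in>PiE {..<n2} (\<lambda>_. UNIV).
        complex_of_real (\<Prod>j<n2. pmf D2 (y j)) * omega_pow (t * bil_form B x y))
      = (\<Sum>y\<in>PiE {..<n2} (\<lambda>_. UNIV).
          \<Prod>j<n2. complex_of_real (pmf D2 (y j)) * omega_pow (t * w j * y j))"
      by (simp add: prod.distrib)
    also have "\<dots> = (\<Prod>j<n2. \<Sum>v\<in>UNIV. complex_of_real (pmf D2 v) * omega_pow (t * w j * v))"
      by (rule prod_sum_PiE[symmetric]) auto
    finally show ?thesis
      unfolding pmf_fourier_def .
  qed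
  have "bias t D1 D2 B = (\<Sum>x\<in>PiE {..<n1} (\<lambda>_. UNIV). complex_of_real (\<Prod>i<n1. pmf D1 (x i)) *
     (\<Sum>y\<in>PiE {..<n2} (\<lambda>_. UNIV).
        complex_of_real (\<Prod>j<n2. pmf D2 (y j)) * omega_pow (t * bil_form B x y)))"
    using assms unfolding bias_def by (simp add: sum_distrib_left mult.assoc)
  then show ?thesis
    by (simp only: average_y[OF refl])
qed

lemma norm_bias_le_sum_prod_norm_pmf_fourier:
  fixes D1 D2 :: "'p::prime_card mod_ring pmf"
  assumes "B \<in> carrier_mat n1 n2"
  shows "norm (bias t D1 D2 B) \<le> (\<Sum>x\<in>PiE {..<n1} (\<lambda>_. UNIV). (\<Prod>i<n1. pmf D1 (x i))
      * (\<Prod>j<n2. norm (pmf_fourier D2 (t * (\<Sum>i<n1. x i * B $$ (i, j))))))"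
  unfolding bias_eq_sum_prod_pmf_fourier[OF assms]
  by (rule order_trans[OF norm_sum], rule sum_mono)
    (simp add: norm_mult prod_nonneg prod_norm[symmetric] del: of_real_prod)

definition lin_indep_family :: "'i set \<Rightarrow> 'k set \<Rightarrow> ('k \<Rightarrow> 'i \<Rightarrow> 'a::field) \<Rightarrow> bool" where
  "lin_indep_family N K f \<longleftrightarrow>
    (\<forall>a. (\<forall>i\<in>N. (\<Sum>k\<in>K. a k * f k i) = 0) \<longrightarrow> (\<forall>k\<in>K. a k = 0))"

lemma lin_indep_family_nonzero_entry:
  assumes "lin_indep_family N K f" "finite K" "k0 \<in> K"
  obtains i0 where "i0 \<in> N" "f k0 i0 \<noteq> 0"
proof -
  have "\<exists>i0\<in>N. f k0 i0 \<noteq> 0"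
  proof (rule ccontr)
    assume "\<not> (\<exists>i0\<in>N. f k0 i0 \<noteq> 0)"
    then have "\<forall>i\<in>N. (\<Sum>k\<in>K. (if k = k0 then 1 else 0) * f k i) = 0"
      using assms(2,3) by (simp add: if_distrib sum.delta' cong: if_cong)
    then show False
      using assms(1,3) unfolding lin_indep_family_def by fastforce
  qed
  then show thesis
    using that by blast
qed

lemma lin_indep_family_eliminate:
  assumes "lin_indep_family N K f" "finite K" "k0 \<in> K" "i0 \<in> N" "f k0 i0 \<noteq> 0"
  shows "lin_indep_family (N - {i0}) (K - {k0}) (\<lambda>k i. f k i - f k i0 / f k0 i0 * f k0 i)"
  unfolding lin_indep_family_def
proof (intro allI impI)
  fix a
  let ?g = "\<lambda>k i. f k i - f k i0 / f k0 i0 * f k0 i"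
  assume "\<forall>i\<in>N - {i0}. (\<Sum>k\<in>K - {k0}. a k * ?g k i) = 0"
  moreover have "?g k i0 = 0" for k
    using assms(5) by simp
  ultimately have g_comb: "(\<Sum>k\<in>K - {k0}. a k * ?g k i) = 0" if "i \<in> N" for i
    using that by (cases "i = i0") auto
  define a' where "a' k = (if k = k0 then - (\<Sum>k'\<in>K - {k0}. a k' * (f k' i0 / f k0 i0)) else a k)" for k
  have "(\<Sum>k\<in>K. a' k * f k i) = (\<Sum>k\<in>K - {k0}. a k * ?g k i)" for i
  proof -
    have "(\<Sum>k\<in>K. a' k * f k i) = a' k0 * f k0 i + (\<Sum>k\<in>K - {k0}. a' k * f k i)"
      using assms(2,3) by (simp add: sum.remove)
    also have "\<dots> = - (\<Sum>k'\<in>K - {k0}. a k' * (f k' i0 / f k0 i0)) * f k0 i + (\<Sum>k\<in>K - {k0}. a k * f k i)"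
      unfolding a'_def by (auto intro!: sum.cong)
    also have "\<dots> = (\<Sum>k\<in>K - {k0}. a k * ?g k i)"
      by (simp add: sum_distrib_right sum_distrib_left algebra_simps sum_subtractf)
    finally show ?thesis .
  qed
  then have "\<forall>k\<in>K. a' k = 0"
    using assms(1) g_comb unfolding lin_indep_family_def by simp
  then show "\<forall>k\<in>K - {k0}. a k = 0"
    unfolding a'_def by (metis DiffD1 DiffD2 singletonI)
qed

definition prod_pmf_prob :: "'a::finite pmf \<Rightarrow> 'i set \<Rightarrow> (('i \<Rightarrow> 'a) \<Rightarrow> bool) \<Rightarrow> real" where
  "prod_pmf_prob D N P = (\<Sum>x\<in>PiE N (\<lambda>_. UNIV). if P x then \<Prod>i\<in>N. pmf D (x i) else 0)"

lemma sum_PiE_prod_pmf: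
  assumes "finite N"
  shows "(\<Sum>x\<in>PiE N (\<lambda>_. (UNIV::'b::finite set)). \<Prod>i\<in>N. pmf D (x i)) = 1"
proof -
  have "(\<Sum>x\<in>PiE N (\<lambda>_. (UNIV::'b set)). \<Prod>i\<in>N. pmf D (x i)) = (\<Prod>i\<in>N. \<Sum>v\<in>UNIV. pmf D v)"
    by (rule prod_sum_PiE[symmetric]) (use assms in auto)
  then show ?thesis
    by (simp add: sum_pmf_UNIV)
qed

lemma prod_pmf_prob_le_1:
  assumes "finite N"
  shows "prod_pmf_prob D N P \<le> 1"
proof -
  have "prod_pmf_prob D N P \<le> (\<Sum>x\<in>PiE N (\<lambda>_. UNIV). \<Prod>i\<in>N. pmf D (x i))"
    unfolding prod_pmf_prob_def by (intro sum_mono) (simp add: prod_nonneg)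
  then show ?thesis
    using sum_PiE_prod_pmf[OF assms, of D] by simp
qed

lemma prod_pmf_prob_mono:
  assumes "\<And>x. P x \<Longrightarrow> Q x"
  shows "prod_pmf_prob D N P \<le> prod_pmf_prob D N Q"
  unfolding prod_pmf_prob_def using assms by (intro sum_mono) (auto simp: prod_nonneg)

lemma sum_PiE_insert:
  assumes "finite S" "i \<notin> S"
  shows "(\<Sum>x\<in>PiE (insert i S) (\<lambda>_. (UNIV::'b::finite set)). F x)
       = (\<Sum>g\<in>PiE S (\<lambda>_. UNIV). \<Sum>y\<in>UNIV. F (g(i := y)))"
proof -
  have "(\<Sum>x\<in>PiE (insert i S) (\<lambda>_. (UNIV::'b set)). F x)
      = (\<Sum>x\<in>(\<lambda>(y, g). g(i := y)) ` (UNIV \<times> PiE S (\<lambda>_. (UNIV::'b set))). F x)"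
    by (simp add: PiE_insert_eq)
  also have "\<dots> = (\<Sum>(y, g)\<in>UNIV \<times> PiE S (\<lambda>_. (UNIV::'b set)). F (g(i := y)))"
    by (subst sum.reindex) (use inj_combinator[OF assms(2), of "\<lambda>_. UNIV"] in \<open>auto simp: case_prod_unfold\<close>)
  also have "\<dots> = (\<Sum>g\<in>PiE S (\<lambda>_. UNIV). \<Sum>y\<in>UNIV. F (g(i := y)))"
    by (subst sum.cartesian_product[symmetric]) (rule sum.swap)
  finally show ?thesis .
qed

lemma prod_pmf_prob_insert_le:
  fixes D :: "'a::finite pmf"
  assumes "finite N" "i0 \<notin> N" "\<And>v. pmf D v \<le> q"
    and "\<And>x y. P (x(i0 := y)) = P x" "\<And>x y. \<phi> (x(i0 := y)) = \<phi> x"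
  shows "prod_pmf_prob D (insert i0 N) (\<lambda>x. P x \<and> x i0 = \<phi> x) \<le> q * prod_pmf_prob D N P"
proof -
  have prod_upd: "(\<Prod>i\<in>insert i0 N. pmf D ((x(i0 := y)) i)) = pmf D y * (\<Prod>i\<in>N. pmf D (x i))"
    for x y
    using assms(1,2) by (auto intro!: prod.cong)
  have "prod_pmf_prob D (insert i0 N) (\<lambda>x. P x \<and> x i0 = \<phi> x)
      = (\<Sum>x\<in>PiE N (\<lambda>_. UNIV). \<Sum>y\<in>UNIV. if P x \<and> y = \<phi> x then pmf D y * (\<Prod>i\<in>N. pmf D (x i)) else 0)"
    unfolding prod_pmf_prob_def sum_PiE_insert[OF assms(1,2)] fun_upd_same assms(4,5) prod_upd ..
  also have "\<dots> = (\<Sum>x\<in>PiE N (\<lambda>_. UNIV). if P x then pmf D (\<phi> x) * (\<Prod>i\<in>N. pmf D (x i)) else 0)"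
  proof (intro sum.cong refl)
    fix x
    show "(\<Sum>y\<in>UNIV. if P x \<and> y = \<phi> x then pmf D y * (\<Prod>i\<in>N. pmf D (x i)) else 0)
        = (if P x then pmf D (\<phi> x) * (\<Prod>i\<in>N. pmf D (x i)) else 0)"
      by (cases "P x") simp_all
  qed
  also have "\<dots> \<le> (\<Sum>x\<in>PiE N (\<lambda>_. UNIV). q * (if P x then \<Prod>i\<in>N. pmf D (x i) else 0))"
    by (intro sum_mono) (auto intro!: mult_right_mono assms(3) prod_nonneg)
  finally show ?thesis
    unfolding prod_pmf_prob_def by (simp add: sum_distrib_left)
qed

lemma lin_eqs_eliminate:
  fixes f :: "'k \<Rightarrow> 'i \<Rightarrow> 'a::field"
  assumes "finite N" "i0 \<in> N" "k0 \<in> K" "f k0 i0 \<noteq> 0"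
    and eqs: "\<forall>k\<in>K. (\<Sum>i\<in>N. f k i * x i) = z k"
  shows "\<forall>k\<in>K - {k0}. (\<Sum>i\<in>N - {i0}. (f k i - f k i0 / f k0 i0 * f k0 i) * x i)
      = z k - f k i0 / f k0 i0 * z k0"
    and "x i0 = (z k0 - (\<Sum>i\<in>N - {i0}. f k0 i * x i)) / f k0 i0"
proof -
  have sum_N: "(\<Sum>i\<in>N. h i) = h i0 + (\<Sum>i\<in>N - {i0}. h i)" for h :: "'i \<Rightarrow> 'a"
    using assms(1,2) by (simp add: sum.remove)
  show "\<forall>k\<in>K - {k0}. (\<Sum>i\<in>N - {i0}. (f k i - f k i0 / f k0 i0 * f k0 i) * x i)
      = z k - f k i0 / f k0 i0 * z k0"
  proof
    fix k
    assume "k \<in> K - {k0}"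
    have "(\<Sum>i\<in>N - {i0}. (f k i - f k i0 / f k0 i0 * f k0 i) * x i)
        = (\<Sum>i\<in>N. (f k i - f k i0 / f k0 i0 * f k0 i) * x i)"
      using sum_N[of "\<lambda>i. (f k i - f k i0 / f k0 i0 * f k0 i) * x i"] assms(4) by simp
    also have "\<dots> = (\<Sum>i\<in>N. f k i * x i) - f k i0 / f k0 i0 * (\<Sum>i\<in>N. f k0 i * x i)"
      by (simp add: algebra_simps sum_subtractf sum_distrib_left)
    finally show "(\<Sum>i\<in>N - {i0}. (f k i - f k i0 / f k0 i0 * f k0 i) * x i)
        = z k - f k i0 / f k0 i0 * z k0"
      using eqs \<open>k \<in> K - {k0}\<close> assms(3) by simp
  qed
  have "f k0 i0 * x i0 + (\<Sum>i\<in>N - {i0}. f k0 i * x i) = z k0"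
    using eqs assms(3) sum_N[of "\<lambda>i. f k0 i * x i"] by simp
  then show "x i0 = (z k0 - (\<Sum>i\<in>N - {i0}. f k0 i * x i)) / f k0 i0"
    using assms(4) by (simp add: field_simps)
qed

lemma prod_pmf_prob_lin_eqs_pivot_le:
  fixes f :: "'k \<Rightarrow> 'i \<Rightarrow> 'a::{field,finite}" and D :: "'a pmf"
  assumes "finite N" "i0 \<in> N" "k0 \<in> K" "f k0 i0 \<noteq> 0" "\<And>v. pmf D v \<le> q"
  shows "prod_pmf_prob D N (\<lambda>x. \<forall>k\<in>K. (\<Sum>i\<in>N. f k i * x i) = z k)
    \<le> q * prod_pmf_prob D (N - {i0}) (\<lambda>x. \<forall>k\<in>K - {k0}.
      (\<Sum>i\<in>N - {i0}. (f k i - f k i0 / f k0 i0 * f k0 i) * x i) = z k - f k i0 / f k0 i0 * z k0)"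
    (is "_ \<le> q * prod_pmf_prob D ?N' ?P'")
proof -
  define \<phi> where "\<phi> x = (z k0 - (\<Sum>i\<in>?N'. f k0 i * x i)) / f k0 i0" for x :: "'i \<Rightarrow> 'a"
  have "finite ?N'" "i0 \<notin> ?N'"
    using assms(1) by auto
  have sum_upd: "(\<Sum>i\<in>?N'. h i * (x(i0 := y)) i) = (\<Sum>i\<in>?N'. h i * x i)" for h x y
    by (intro sum.cong) auto
  have "prod_pmf_prob D N (\<lambda>x. \<forall>k\<in>K. (\<Sum>i\<in>N. f k i * x i) = z k)
      \<le> prod_pmf_prob D (insert i0 ?N') (\<lambda>x. ?P' x \<and> x i0 = \<phi> x)"
    unfolding insert_Diff[OF assms(2)]
  proof (rule prod_pmf_prob_mono)
    fix x
    assume "\<forall>k\<in>K. (\<Sum>i\<in>N. f k i * x i) = z k"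
    from lin_eqs_eliminate[where f = f, OF assms(1-4) this] show "?P' x \<and> x i0 = \<phi> x"
      unfolding \<phi>_def by blast
  qed
  also have "\<dots> \<le> q * prod_pmf_prob D ?N' ?P'"
    by (rule prod_pmf_prob_insert_le[OF \<open>finite ?N'\<close> \<open>i0 \<notin> ?N'\<close> assms(5)])
      (simp_all only: \<phi>_def sum_upd)
  finally show ?thesis .
qed

text \<open>Gaussian elimination: on the solution set each pivot coordinate is a function of the
  remaining ones, and fixing it costs a factor q.\<close>
lemma prod_pmf_prob_lin_eqs_le:
  fixes f :: "'k \<Rightarrow> 'i \<Rightarrow> 'a::{field,finite}" and D :: "'a pmf"
  assumes "finite N" "finite K" "lin_indep_family N K f" "\<And>v. pmf D v \<le> q"
  shows "prod_pmf_prob D N (\<lambda>x. \<forall>k\<in>K. (\<Sum>i\<in>N. f k i * x i) = z k) \<le> q ^ card K"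
  using assms
proof (induction "card K" arbitrary: K f z N)
  case 0
  then show ?case
    using prod_pmf_prob_le_1 by simp
next
  case (Suc m)
  obtain k0 where k0: "k0 \<in> K"
    using Suc.hyps(2) by fastforce
  obtain i0 where i0: "i0 \<in> N" "f k0 i0 \<noteq> 0"
    using lin_indep_family_nonzero_entry[OF Suc.prems(3,2) k0] .
  have "0 \<le> q"
    using Suc.prems(4)[of undefined] pmf_nonneg[of D undefined] by linarith
  have "m = card (K - {k0})"
    using Suc.hyps(2) k0 Suc.prems(2) by simp
  note IH = Suc.hyps(1)[OF this finite_Diff[OF Suc.prems(1)] finite_Diff[OF Suc.prems(2)]
      lin_indep_family_eliminate[OF Suc.prems(3,2) k0 i0] Suc.prems(4)]
  have "prod_pmf_prob D N (\<lambda>x. \<forall>k\<in>K. (\<Sum>i\<in>N. f k i * x i) = z k) \<le> q * q ^ card (K - {k0})"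
    using prod_pmf_prob_lin_eqs_pivot_le[where f = f, OF Suc.prems(1) i0(1) k0 i0(2) Suc.prems(4)]
      mult_left_mono[OF IH \<open>0 \<le> q\<close>] by (rule order_trans)
  also have "q * q ^ card (K - {k0}) = q ^ card K"
    using card_Suc_Diff1[OF Suc.prems(2) k0] by (metis power_Suc)
  finally show ?case .
qed

lemma sum_if_zero_UNIV:
  "(\<Sum>v\<in>(UNIV::'a::{zero,finite} set). if v = 0 then 1 else (la::real)) = 1 + (real CARD('a) - 1) * la"
proof -
  have "(\<Sum>v\<in>(UNIV::'a set). if v = 0 then 1 else la) = 1 + (\<Sum>v\<in>UNIV - {0::'a}. la)"
    by (subst sum.remove[of UNIV 0]) (auto intro!: sum.cong)
  also have "\<dots> = 1 + real (CARD('a) - 1) * la"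
    by (simp add: card_Diff_singleton)
  finally show ?thesis
    by (simp add: of_nat_diff Suc_le_eq)
qed

lemma prod_eq_sum_PiE_indicator:
  assumes "finite K"
  shows "(\<Prod>k\<in>K. g (W k)) = (\<Sum>z\<in>PiE K (\<lambda>_. (UNIV::'a::finite set)).
    if (\<forall>k\<in>K. W k = z k) then (\<Prod>k\<in>K. g (z k)) else (0::real))"
proof -
  have "(\<forall>k\<in>K. W k = z k) \<longleftrightarrow> z = restrict W K" if "z \<in> PiE K (\<lambda>_. UNIV)" for z
    using that by (auto simp: PiE_def extensional_def fun_eq_iff)
  then have "(\<Sum>z\<in>PiE K (\<lambda>_. (UNIV::'a set)). if (\<forall>k\<in>K. W k = z k) then (\<Prod>k\<in>K. g (z k)) else 0)
      = (\<Sum>z\<in>PiE K (\<lambda>_. (UNIV::'a set)). if z = restrict W K then (\<Prod>k\<in>K. g (z k)) else 0)"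
    by (intro sum.cong) auto
  also have "\<dots> = (\<Prod>k\<in>K. g (W k))"
    using assms by (simp add: sum.delta finite_PiE)
  finally show ?thesis ..
qed

text \<open>Summing first over the values z of the forms, each z has probability at most q^|K|.\<close>
lemma sum_prod_pmf_weight_nonzero_le:
  fixes f :: "'k \<Rightarrow> 'i \<Rightarrow> 'a::{field,finite}" and D :: "'a pmf"
  assumes "finite N" "finite K" "lin_indep_family N K f" "\<And>v. pmf D v \<le> q" "0 \<le> la"
  shows "(\<Sum>x\<in>PiE N (\<lambda>_. UNIV). (\<Prod>i\<in>N. pmf D (x i))
      * (\<Prod>k\<in>K. if (\<Sum>i\<in>N. f k i * x i) = 0 then 1 else la))
    \<le> q ^ card K * (1 + (real CARD('a) - 1) * la) ^ card K"
proof -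
  let ?l = "\<lambda>v::'a. if v = 0 then 1 else la"
  let ?E = "\<lambda>z x. \<forall>k\<in>K. (\<Sum>i\<in>N. f k i * x i) = z k"
  have "(\<Sum>x\<in>PiE N (\<lambda>_. UNIV). (\<Prod>i\<in>N. pmf D (x i)) * (\<Prod>k\<in>K. ?l (\<Sum>i\<in>N. f k i * x i)))
     = (\<Sum>x\<in>PiE N (\<lambda>_. UNIV). \<Sum>z\<in>PiE K (\<lambda>_. (UNIV::'a set)).
         (\<Prod>i\<in>N. pmf D (x i)) * (if ?E z x then (\<Prod>k\<in>K. ?l (z k)) else 0))"
    by (subst prod_eq_sum_PiE_indicator[OF assms(2)]) (simp add: sum_distrib_left)
  also have "\<dots> = (\<Sum>z\<in>PiE K (\<lambda>_. (UNIV::'a set)). (\<Prod>k\<in>K. ?l (z k)) * prod_pmf_prob D N (?E z))"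
    unfolding prod_pmf_prob_def
    by (subst sum.swap) (simp add: sum_distrib_left if_distrib mult.commute cong: if_cong)
  also have "\<dots> \<le> (\<Sum>z\<in>PiE K (\<lambda>_. (UNIV::'a set)). (\<Prod>k\<in>K. ?l (z k)) * q ^ card K)"
    by (intro sum_mono mult_left_mono prod_pmf_prob_lin_eqs_le[OF assms(1-4)] prod_nonneg)
      (use assms(5) in auto)
  also have "\<dots> = q ^ card K * (\<Sum>z\<in>PiE K (\<lambda>_. (UNIV::'a set)). \<Prod>k\<in>K. ?l (z k))"
    by (simp add: sum_distrib_left mult.commute)
  also have "\<dots> = q ^ card K * (\<Prod>k\<in>K. \<Sum>v\<in>UNIV. ?l v)"
    by (subst prod_sum_PiE) (use assms(2) in auto)
  finally show ?thesis
    by (simp add: sum_if_zero_UNIV)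
qed

text \<open>If m \<ge> \<kappa> the first summand alone suffices; if m < \<kappa> the second one is at least 1.\<close>
lemma exp_le_exp_add_powr:
  fixes A \<kappa> la :: real
  assumes "0 \<le> A" "0 < la" "la \<le> 1"
  shows "exp (- A * real m) \<le> exp (- A * \<kappa>) + la powr (-\<kappa>) * la ^ m"
proof (cases "\<kappa> \<le> real m")
  case True
  then have "exp (- A * real m) \<le> exp (- A * \<kappa>)"
    using assms(1) by (simp add: mult_left_mono)
  then show ?thesis
    using assms(2) by (simp add: add_increasing2)
next
  case False
  have "la powr (-\<kappa>) * la ^ m = la powr (real m - \<kappa>)"
    using assms(2) by (simp add: powr_realpow[symmetric] powr_add[symmetric])
  also have "\<dots> = exp ((real m - \<kappa>) * ln la)"
    using assms(2) by (simp add: powr_def)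
  also have "\<dots> \<ge> 1"
    using False assms(2,3) by (simp add: mult_nonpos_nonpos)
  moreover have "exp (- A * real m) \<le> 1"
    using assms(1) by simp
  ultimately show ?thesis
    using exp_ge_zero[of "- A * \<kappa>"] by linarith
qed

lemma prod_if_eq_power_card:
  assumes "finite J"
  shows "(\<Prod>j\<in>J. if P j then 1 else a) = a ^ card {j\<in>J. \<not> P j}"
proof -
  have "(\<Prod>j\<in>J. if P j then 1 else a) = (\<Prod>j\<in>J. if \<not> P j then a else 1)"
    by (intro prod.cong) auto
  also have "\<dots> = a ^ card {j\<in>J. \<not> P j}"
    by (simp add: prod.inter_filter[OF assms, symmetric])
  finally show ?thesis .
qed

lemma prod_norm_pmf_fourier_le_exp_card:
  fixes D :: "'p::prime_card mod_ring pmf" and n :: nat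
  assumes "J \<subseteq> {..<n}" "t \<noteq> 0" "\<And>x. pmf D x \<le> 1 - c"
  shows "(\<Prod>j<n. norm (pmf_fourier D (t * w j)))
    \<le> exp (- (c * (1 - cos (2 * pi / real CARD('p))) / 2) * real (card {j\<in>J. w j \<noteq> 0}))"
proof -
  let ?a = "exp (- (c * (1 - cos (2 * pi / real CARD('p)))) / 2)"
  have fin: "finite J"
    using assms(1) by (rule finite_subset) simp
  have "(\<Prod>j<n. norm (pmf_fourier D (t * w j)))
      = (\<Prod>j\<in>J. norm (pmf_fourier D (t * w j))) * (\<Prod>j\<in>{..<n} - J. norm (pmf_fourier D (t * w j)))"
    using prod.subset_diff[OF assms(1)] by (simp add: mult.commute)
  also have "\<dots> \<le> (\<Prod>j\<in>J. norm (pmf_fourier D (t * w j)))"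
    by (intro mult_left_le prod_le_1 prod_nonneg) (auto simp: norm_pmf_fourier_le_1)
  also have "\<dots> \<le> (\<Prod>j\<in>J. if w j = 0 then 1 else ?a)"
  proof (intro prod_mono conjI norm_ge_zero)
    fix j
    show "norm (pmf_fourier D (t * w j)) \<le> (if w j = 0 then 1 else ?a)"
    proof (cases "w j = 0")
      case False
      then show ?thesis
        using norm_pmf_fourier_le_exp[OF _ assms(3), of "t * w j"] assms(2) by simp
    qed (simp add: norm_pmf_fourier_le_1)
  qed
  also have "\<dots> = ?a ^ card {j\<in>J. w j \<noteq> 0}"
    by (rule prod_if_eq_power_card[OF fin])
  finally show ?thesis
    by (simp add: exp_of_nat_mult[symmetric] mult_ac)
qed


lemma norm_bias_le_sum_exp_card:
  fixes D1 D2 :: "'p::prime_card mod_ring pmf"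
  assumes "B \<in> carrier_mat n1 n2" "t \<noteq> 0" "\<And>x. pmf D2 x \<le> 1 - c2" "J \<subseteq> {..<n2}"
  shows "norm (bias t D1 D2 B) \<le> (\<Sum>x\<in>PiE {..<n1} (\<lambda>_. UNIV). (\<Prod>i<n1. pmf D1 (x i))
      * exp (- (c2 * (1 - cos (2 * pi / real CARD('p))) / 2)
          * real (card {j\<in>J. (\<Sum>i<n1. x i * B $$ (i, j)) \<noteq> 0})))"
  using norm_bias_le_sum_prod_norm_pmf_fourier[OF assms(1)]
  by (rule order_trans)
    (intro sum_mono mult_left_mono prod_norm_pmf_fourier_le_exp_card[OF assms(4,2,3)] prod_nonneg pmf_nonneg)

lemma norm_bias_le_tradeoff:
  fixes D1 D2 :: "'p::prime_card mod_ring pmf" and \<kappa> la :: real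
  assumes B: "B \<in> carrier_mat n1 n2" and t: "t \<noteq> 0"
    and D1: "\<And>x. pmf D1 x \<le> 1 - c1" and D2: "\<And>x. pmf D2 x \<le> 1 - c2" and "0 \<le> c2"
    and J: "J \<subseteq> {..<n2}" "lin_indep_family {..<n1} J (\<lambda>j i. B $$ (i, j))"
    and la: "0 < la" "la \<le> 1"
  shows "norm (bias t D1 D2 B) \<le> exp (- (c2 * (1 - cos (2 * pi / real CARD('p))) / 2) * \<kappa>)
      + la powr (-\<kappa>) * (1 - c1) ^ card J * (1 + (real CARD('p) - 1) * la) ^ card J"
proof -
  define A where "A = c2 * (1 - cos (2 * pi / real CARD('p))) / 2"
  define m where "m x = card {j\<in>J. (\<Sum>i<n1. x i * B $$ (i, j)) \<noteq> 0}" for x :: "nat \<Rightarrow> 'p mod_ring"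
  define P where "P x = (\<Prod>i<n1. pmf D1 (x i))" for x :: "nat \<Rightarrow> 'p mod_ring"
  have "0 \<le> A"
    unfolding A_def using \<open>0 \<le> c2\<close> by simp
  have P_nonneg: "0 \<le> P x" for x
    unfolding P_def by (simp add: prod_nonneg)
  have "finite J"
    using J(1) by (rule finite_subset) simp
  have "la ^ m x = (\<Prod>j\<in>J. if (\<Sum>i\<in>{..<n1}. B $$ (i, j) * x i) = 0 then 1 else la)" for x
    unfolding prod_if_eq_power_card[OF \<open>finite J\<close>] m_def by (simp add: mult.commute)
  then have weight_bound: "(\<Sum>x\<in>PiE {..<n1} (\<lambda>_. UNIV). P x * la ^ m x)
      \<le> (1 - c1) ^ card J * (1 + (real CARD('p) - 1) * la) ^ card J"
    unfolding P_def using sum_prod_pmf_weight_nonzero_le[OF _ \<open>finite J\<close> J(2) D1] la by simp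
  have "norm (bias t D1 D2 B) \<le> (\<Sum>x\<in>PiE {..<n1} (\<lambda>_. UNIV). P x * exp (- A * real (m x)))"
    unfolding P_def m_def A_def by (rule norm_bias_le_sum_exp_card[OF B t D2 J(1)])
  also have "\<dots> \<le> (\<Sum>x\<in>PiE {..<n1} (\<lambda>_. UNIV). P x * (exp (- A * \<kappa>) + la powr (-\<kappa>) * la ^ m x))"
    by (intro sum_mono mult_left_mono exp_le_exp_add_powr \<open>0 \<le> A\<close> la P_nonneg)
  also have "\<dots> = exp (- A * \<kappa>) * (\<Sum>x\<in>PiE {..<n1} (\<lambda>_. UNIV). P x)
      + la powr (-\<kappa>) * (\<Sum>x\<in>PiE {..<n1} (\<lambda>_. UNIV). P x * la ^ m x)"
    by (simp add: algebra_simps sum.distrib sum_distrib_left)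
  also have "(\<Sum>x\<in>PiE {..<n1} (\<lambda>_. UNIV). P x) = 1"
    unfolding P_def by (rule sum_PiE_prod_pmf) simp
  also have "la powr (-\<kappa>) * (\<Sum>x\<in>PiE {..<n1} (\<lambda>_. UNIV). P x * la ^ m x)
      \<le> la powr (-\<kappa>) * (1 - c1) ^ card J * (1 + (real CARD('p) - 1) * la) ^ card J"
    using mult_left_mono[OF weight_bound powr_ge_zero] by (simp add: mult.assoc)
  finally show ?thesis
    unfolding A_def by simp
qed

lemma (in vec_space) lincomb_col_image_index:
  assumes B: "B \<in> carrier_mat n nc" and J: "J \<subseteq> {..<nc}" "inj_on (col B) J" and "i < n"
  shows "lincomb a (col B ` J) $ i = (\<Sum>j\<in>J. a (col B j) * B $$ (i, j))"
proof -
  have carrier: "col B ` J \<subseteq> carrier_vec n"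
    using B J(1) by auto
  have "lincomb a (col B ` J) $ i = (\<Sum>j\<in>J. a (col B j) * col B j $ i)"
    unfolding lincomb_index[OF \<open>i < n\<close> carrier] by (simp add: sum.reindex[OF J(2)])
  also have "\<dots> = (\<Sum>j\<in>J. a (col B j) * B $$ (i, j))"
    using B J(1) \<open>i < n\<close> by (intro sum.cong) auto
  finally show ?thesis .
qed

lemma (in vec_space) lin_indep_family_cols:
  assumes B: "B \<in> carrier_mat n nc" and S: "S \<subseteq> set (cols B)" "lin_indpt S"
  obtains J where "J \<subseteq> {..<nc}" "card J = card S" "lin_indep_family {..<n} J (\<lambda>j i. B $$ (i, j))"
proof -
  have "S \<subseteq> col B ` {..<nc}"
    using S(1) B unfolding cols_def by auto
  then obtain J where J: "J \<subseteq> {..<nc}" "inj_on (col B) J" "S = col B ` J"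
    unfolding subset_image_inj by blast
  have "finite J"
    using J(1) by (rule finite_subset) simp
  have S_carrier: "S \<subseteq> carrier_vec n"
    using S(1) B cols_dim by blast
  have "lin_indep_family {..<n} J (\<lambda>j i. B $$ (i, j))"
    unfolding lin_indep_family_def
  proof (intro allI impI)
    fix a
    assume a: "\<forall>i\<in>{..<n}. (\<Sum>j\<in>J. a j * B $$ (i, j)) = 0"
    define a' where "a' = a \<circ> inv_into J (col B)"
    have a': "a' (col B j) = a j" if "j \<in> J" for j
      unfolding a'_def using J(2) that by simp
    have "lincomb a' S = 0\<^sub>v n"
    proof (rule eq_vecI)
      fix i
      assume "i < dim_vec (0\<^sub>v n)"
      then have "i < n"
        by simp
      have "(\<Sum>j\<in>J. a' (col B j) * B $$ (i, j)) = (\<Sum>j\<in>J. a j * B $$ (i, j))"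
        using a' by (intro sum.cong) auto
      then show "lincomb a' S $ i = 0\<^sub>v n $ i"
        unfolding J(3) lincomb_col_image_index[OF B J(1,2) \<open>i < n\<close>] using a \<open>i < n\<close> by simp
    qed (use lincomb_dim[OF _ S_carrier] \<open>finite J\<close> J(3) in simp)
    then have "a' \<in> S \<rightarrow> {0}"
      using not_lindepD[OF S(2) _ subset_refl] \<open>finite J\<close> J(3) by simp
    then show "\<forall>j\<in>J. a j = 0"
      using a' unfolding J(3) by (simp add: Pi_iff)
  qed
  moreover have "card J = card S"
    using card_image[OF J(2)] J(3) by simp
  ultimately show thesis
    using that J(1) by blast
qed

lemma (in vec_space) exists_lin_indep_cols_card_rank:
  assumes B: "B \<in> carrier_mat n nc"
  obtains J where "J \<subseteq> {..<nc}" "card J = rank B" "lin_indep_family {..<n} J (\<lambda>j i. B $$ (i, j))"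
proof -
  have "lin_indpt {}"
    unfolding lin_dep_def by auto
  then obtain S where S: "maximal S (\<lambda>T. T \<subseteq> set (cols B) \<and> lin_indpt T)"
    using maximal_exists_superset[of "set (cols B)" "\<lambda>T. T \<subseteq> set (cols B) \<and> lin_indpt T" "{}"]
    by auto
  then have "S \<subseteq> set (cols B)" "lin_indpt S"
    unfolding maximal_def by auto
  then obtain J where "J \<subseteq> {..<nc}" "card J = card S" "lin_indep_family {..<n} J (\<lambda>j i. B $$ (i, j))"
    using lin_indep_family_cols[OF B] by blast
  then show thesis
    using that rank_card_indpt[OF B S] by simp
qed

lemma cos_le_taylor_4: "cos (x::real) \<le> 1 - x\<^sup>2 / 2 + x ^ 4 / 24"
proof -
  obtain t where t: "cos x = (\<Sum>m<4. cos_coeff m * x ^ m) + cos (t + 1/2 * real 4 * pi) / fact 4 * x ^ 4"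
    using Maclaurin_cos_expansion[of x 4] by blast
  have "(\<Sum>m<4. cos_coeff m * x ^ m)
      = cos_coeff 0 * x ^ 0 + cos_coeff 1 * x ^ 1 + cos_coeff 2 * x ^ 2 + cos_coeff 3 * x ^ 3"
    by (simp add: numeral_eq_Suc)
  moreover have "cos_coeff 0 = 1" "cos_coeff 1 = 0" "cos_coeff 2 = -1/2" "cos_coeff 3 = 0"
    by (simp_all add: cos_coeff_def)
  moreover have "(fact 4 :: real) = 24"
    by (simp add: numeral_eq_Suc)
  moreover have "cos (t + 1/2 * real 4 * pi) / 24 * x ^ 4 \<le> 1 / 24 * x ^ 4"
    by (intro mult_right_mono divide_right_mono) auto
  ultimately show ?thesis
    using t by simp
qed

lemma pi_squared_le_10: "pi\<^sup>2 \<le> 10"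
proof -
  have "pi\<^sup>2 \<le> (63/20)\<^sup>2"
    using pi_approx by (intro power_mono) auto
  then show ?thesis
    by (simp add: power2_eq_square)
qed

lemma one_minus_cos_2pi_div_3_ge: "(1 - cos (2 * pi / 3)) * 3\<^sup>2 / pi\<^sup>2 \<ge> 4/3"
  using pi_squared_le_10 cos_120 by (simp add: field_simps)

lemma one_minus_cos_2pi_div_ge:
  fixes p :: real
  assumes "p \<ge> 4"
  shows "(1 - cos (2 * pi / p)) * p\<^sup>2 / pi\<^sup>2 \<ge> 19/12"
proof -
  define x where "x = 2 * pi / p"
  have "(x\<^sup>2 / 2 - x ^ 4 / 24) * p\<^sup>2 / pi\<^sup>2 \<le> (1 - cos x) * p\<^sup>2 / pi\<^sup>2"
    using cos_le_taylor_4[of x] by (intro divide_right_mono mult_right_mono) auto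
  moreover have "(x\<^sup>2 / 2 - x ^ 4 / 24) * p\<^sup>2 / pi\<^sup>2 = 2 - 2 * pi\<^sup>2 / (3 * p\<^sup>2)"
    unfolding x_def using assms by (simp add: field_simps power2_eq_square power4_eq_xxxx)
  moreover have "2 * pi\<^sup>2 / (3 * p\<^sup>2) \<le> 5/12"
  proof -
    have "16 \<le> p\<^sup>2"
      using power_mono[OF assms, of 2] by simp
    then have "2 * pi\<^sup>2 \<le> 5/12 * (3 * p\<^sup>2)"
      using pi_squared_le_10 by linarith
    moreover have "0 < 3 * p\<^sup>2"
      using assms by simp
    ultimately show ?thesis
      by (simp only: pos_divide_le_eq)
  qed
  ultimately show ?thesis
    unfolding x_def by linarith
qed

lemma one_minus_cos_2pi_div_ge_4_3:
  fixes p :: real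
  assumes "p = 3 \<or> p \<ge> 4"
  shows "(1 - cos (2 * pi / p)) * p\<^sup>2 / pi\<^sup>2 \<ge> 4/3"
proof (cases "p = 3")
  case True
  then show ?thesis
    by (simp only: one_minus_cos_2pi_div_3_ge)
next
  case False
  then show ?thesis
    using assms one_minus_cos_2pi_div_ge[of p] by linarith
qed

lemma ln_2_exp_1_mult_div_ge:
  fixes p c :: real
  assumes "0 < c" "c \<le> 1/2" "3 \<le> p"
  shows "1 \<le> ln (2 * exp 1 * p / c)" and "4 \<le> p \<Longrightarrow> 3 \<le> ln (2 * exp 1 * p / c)"
proof -
  have "4 * p \<le> 2 * p / c"
    using assms by (simp add: field_simps)
  then have "exp 1 * (4 * p) \<le> exp 1 * (2 * p / c)"
    by (rule mult_left_mono) simp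
  moreover have "exp 1 * (2 * p / c) = 2 * exp 1 * p / c"
    by simp
  ultimately have le: "exp 1 * (4 * p) \<le> 2 * exp 1 * p / c"
    by linarith
  have "exp 1 * 1 \<le> exp 1 * (4 * p)"
    using assms(3) by (intro mult_left_mono) auto
  then have "exp 1 \<le> 2 * exp 1 * p / c"
    using le by linarith
  then show "1 \<le> ln (2 * exp 1 * p / c)"
    using assms by (subst ln_ge_iff) auto
  assume "4 \<le> p"
  have "exp 3 = exp 1 * (exp 1 * exp (1::real))"
    by (simp flip: exp_add)
  also have "\<dots> \<le> exp 1 * (4 * p)"
    using exp_le mult_mono[of "exp 1" "3::real" "exp 1" 3] \<open>4 \<le> p\<close> by simp
  finally show "3 \<le> ln (2 * exp 1 * p / c)"
    using le assms by (subst ln_ge_iff) auto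
qed

lemma ln_le_tangent:
  fixes a y :: real
  assumes "0 < a" "0 < y"
  shows "ln y \<le> y / a + ln a - 1"
  using ln_le_minus_one[of "y / a"] assms by (simp add: ln_div)

lemma ln_parameter_le:
  fixes p c u :: real
  assumes "p > 1" "0 < c" "0 < u"
  shows "ln ((p - 1) * u / c) \<le> ln ((p - 1) / (2 * p)) + ln (2 * exp 1 * p / c) + u / 4 + ln 4 - 2"
proof -
  have "(p - 1) * u / c = (p - 1) / (2 * p) * (2 * exp 1 * p / c) * u / exp 1"
    using assms by (simp add: field_simps)
  then have "ln ((p - 1) * u / c) = ln ((p - 1) / (2 * p)) + ln (2 * exp 1 * p / c) + ln u - 1"
    using assms by (simp add: ln_mult ln_div)
  then show ?thesis
    using ln_le_tangent[of 4 u] assms(3) by simp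
qed

text \<open>Multiplied by \<beta> = c1/(\<sigma> M), this is the hypothesis key of rank_le_of_tradeoff.\<close>
lemma parameter_ineq:
  fixes p c1 c2 :: real
  assumes p: "p = 3 \<or> p \<ge> 4" and c1: "0 < c1" "c1 \<le> 1/2" and c2: "0 < c2" "c2 \<le> 1/2"
  defines "s \<equiv> 1 - cos (2 * pi / p)"
  defines "\<sigma> \<equiv> s * p\<^sup>2 / pi\<^sup>2" and "M \<equiv> ln (2 * exp 1 * p / c1)"
  shows "ln ((p - 1) * (\<sigma> * M) / c1) + 1 + c2 * s / 2 \<le> \<sigma> * M"
proof -
  have "1 \<le> M" "p \<ge> 4 \<Longrightarrow> 3 \<le> M"
    unfolding M_def using ln_2_exp_1_mult_div_ge[OF c1] p by auto
  have "4/3 \<le> \<sigma>" "p \<ge> 4 \<Longrightarrow> 19/12 \<le> \<sigma>"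
    using one_minus_cos_2pi_div_ge_4_3[OF p] one_minus_cos_2pi_div_ge unfolding \<sigma>_def s_def by auto
  then have "0 < \<sigma> * M"
    using \<open>1 \<le> M\<close> by simp
  have "ln ((p - 1) * (\<sigma> * M) / c1) + 1 + c2 * s / 2
      \<le> ln ((p - 1) / (2 * p)) + M + \<sigma> * M / 4 + ln 4 - 1 + c2 * s / 2"
    using ln_parameter_le[OF _ c1(1) \<open>0 < \<sigma> * M\<close>, of p] p unfolding M_def by auto
  moreover consider "p = 3" | "p \<ge> 4"
    using p by blast
  then have "ln ((p - 1) / (2 * p)) + ln 4 - 1 + c2 * s / 2 + M \<le> 3/4 * (\<sigma> * M)"
  proof cases
    case 1
    have "ln 4 - ln 3 \<le> (1/3::real)"
      using ln_le_minus_one[of "4/3"] by (simp add: ln_div)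
    moreover have "c2 * s / 2 \<le> 3/8"
      unfolding s_def 1 using cos_120 c2 by simp
    moreover have "M \<le> 3/4 * \<sigma> * M"
      using \<open>4/3 \<le> \<sigma>\<close> \<open>1 \<le> M\<close> mult_right_mono[of 1 "3/4 * \<sigma>" M] by simp
    ultimately show ?thesis
      unfolding 1 by (simp add: ln_div)
  next
    case 2
    have "ln ((p - 1) / (2 * p)) \<le> ln (1/2)"
      using 2 by (subst ln_le_cancel_iff) (auto simp: field_simps)
    moreover have "ln 4 = 2 * ln (2::real)"
      using ln_realpow[of 2 2] by simp
    moreover have "c2 * s / 2 \<le> 1/2"
      unfolding s_def using c2 cos_ge_minus_one[of "2 * pi / p"] mult_mono[of c2 "1/2" "1 - cos (2 * pi / p)" 2]
      by simp
    moreover have "M + 9/16 \<le> 3/4 * (\<sigma> * M)"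
      using \<open>p \<ge> 4 \<Longrightarrow> 19/12 \<le> \<sigma>\<close>[OF 2] \<open>p \<ge> 4 \<Longrightarrow> 3 \<le> M\<close>[OF 2]
        mult_right_mono[of "19/12" \<sigma> M] by linarith
    ultimately show ?thesis
      using ln_2_less_1 by (simp add: ln_div)
  qed
  ultimately show ?thesis
    by linarith
qed

lemma tradeoff_factor_le_exp:
  fixes p c1 A \<beta> :: real
  assumes "p > 1" "0 < c1" "c1 < 1" "0 < \<beta>" and key: "\<beta> * (ln ((p - 1) / \<beta>) + 1 + A) \<le> c1"
  shows "(\<beta> / (p - 1)) powr (-\<beta>) * (1 - c1) * (1 + \<beta>) \<le> exp (- A * \<beta>)"
proof -
  define la where "la = \<beta> / (p - 1)"
  have "0 < la"
    unfolding la_def using assms by simp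
  then have pos: "0 < la powr (-\<beta>) * (1 - c1) * (1 + \<beta>)"
    using assms by simp
  have "ln la = ln \<beta> - ln (p - 1)" "ln ((p - 1) / \<beta>) = ln (p - 1) - ln \<beta>"
    unfolding la_def using assms by (simp_all add: ln_div)
  then have "ln la = - ln ((p - 1) / \<beta>)"
    by linarith
  then have "- \<beta> * ln la = \<beta> * ln ((p - 1) / \<beta>)"
    by simp
  moreover have "ln (la powr (-\<beta>) * (1 - c1) * (1 + \<beta>)) = - \<beta> * ln la + ln (1 - c1) + ln (1 + \<beta>)"
    using \<open>0 < la\<close> assms by (simp add: ln_mult)
  ultimately have "ln (la powr (-\<beta>) * (1 - c1) * (1 + \<beta>))
      = \<beta> * ln ((p - 1) / \<beta>) + ln (1 - c1) + ln (1 + \<beta>)"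
    by simp
  also have "\<dots> \<le> \<beta> * ln ((p - 1) / \<beta>) - c1 + \<beta>"
    using ln_le_minus_one[of "1 - c1"] ln_le_minus_one[of "1 + \<beta>"] assms by simp
  also have "\<dots> \<le> - A * \<beta>"
    using key by (simp add: algebra_simps)
  finally show ?thesis
    unfolding la_def[symmetric] using pos by (metis exp_le_cancel_iff exp_ln)
qed

text \<open>The choice \<kappa> = \<beta> r, \<lambda> = \<beta>/(p - 1) makes the second term at most the first one.\<close>
lemma rank_le_of_tradeoff:
  fixes p c1 A \<beta> \<epsilon> :: real and r :: nat
  assumes "p > 1" "0 < c1" "c1 < 1" "0 < \<beta>" "\<beta> \<le> p - 1" "0 < \<epsilon>"
    and key: "\<beta> * (ln ((p - 1) / \<beta>) + 1 + A) \<le> c1"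
    and tradeoff: "\<And>\<kappa> la. 0 \<le> \<kappa> \<Longrightarrow> 0 < la \<Longrightarrow> la \<le> 1 \<Longrightarrow>
       \<epsilon> \<le> exp (- A * \<kappa>) + la powr (-\<kappa>) * (1 - c1) ^ r * (1 + (p - 1) * la) ^ r"
  shows "A * \<beta> * real r \<le> ln (2 / \<epsilon>)"
proof -
  define la where "la = \<beta> / (p - 1)"
  have la: "0 < la" "la \<le> 1"
    unfolding la_def using assms(1,4,5) by auto
  have "la powr (- (\<beta> * real r)) = (la powr (-\<beta>)) powr (real r)"
    by (simp add: powr_powr)
  also have "\<dots> = (la powr (-\<beta>)) ^ r"
    using la by (simp add: powr_realpow)
  finally have "la powr (- (\<beta> * real r)) * (1 - c1) ^ r * (1 + (p - 1) * la) ^ r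
      = (la powr (-\<beta>) * (1 - c1) * (1 + \<beta>)) ^ r"
    unfolding la_def using assms(1) by (simp add: power_mult_distrib)
  also have "\<dots> \<le> exp (- A * \<beta>) ^ r"
    unfolding la_def using tradeoff_factor_le_exp[OF assms(1-4) key] assms(1-4)
    by (intro power_mono) auto
  also have "\<dots> = exp (- A * (\<beta> * real r))"
    by (simp add: exp_of_nat_mult[symmetric] mult_ac)
  finally have "\<epsilon> \<le> 2 * exp (- A * (\<beta> * real r))"
    using tradeoff[OF _ la, of "\<beta> * real r"] assms(4) by simp
  then have "ln \<epsilon> \<le> ln (2 * exp (- A * (\<beta> * real r)))"
    using assms(6) by (subst ln_le_cancel_iff) auto
  also have "\<dots> = ln 2 - A * (\<beta> * real r)"
    by (simp add: ln_mult)
  finally show ?thesis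
    using assms(6) by (simp add: ln_div mult_ac)
qed

lemma rank_le_of_tradeoff_explicit:
  fixes p c1 c2 \<epsilon> :: real and r :: nat
  assumes p: "p = 3 \<or> p \<ge> 4" and c1: "0 < c1" "c1 \<le> 1/2" and c2: "0 < c2" "c2 \<le> 1/2"
    and "0 < \<epsilon>"
    and tradeoff: "\<And>\<kappa> la. 0 \<le> \<kappa> \<Longrightarrow> 0 < la \<Longrightarrow> la \<le> 1 \<Longrightarrow>
       \<epsilon> \<le> exp (- (c2 * (1 - cos (2 * pi / p)) / 2) * \<kappa>)
         + la powr (-\<kappa>) * (1 - c1) ^ r * (1 + (p - 1) * la) ^ r"
  shows "real r \<le> 2 / (c1 * c2 * pi\<^sup>2) * p\<^sup>2 * ln (2 * exp 1 * p / c1) * ln (3 / \<epsilon>)"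
proof -
  define s where "s = 1 - cos (2 * pi / p)"
  define \<sigma> where "\<sigma> = s * p\<^sup>2 / pi\<^sup>2"
  define M where "M = ln (2 * exp 1 * p / c1)"
  define \<beta> where "\<beta> = c1 / (\<sigma> * M)"
  have "4/3 \<le> \<sigma>"
    unfolding \<sigma>_def s_def by (rule one_minus_cos_2pi_div_ge_4_3[OF p])
  then have "s \<noteq> 0"
    unfolding \<sigma>_def by auto
  have "1 \<le> M"
    unfolding M_def using ln_2_exp_1_mult_div_ge(1)[OF c1] p by auto
  then have "c1 \<le> \<sigma> * M"
    using \<open>4/3 \<le> \<sigma>\<close> c1 mult_mono[of 1 \<sigma> 1 M] by simp
  moreover have "0 < \<sigma> * M"
    using \<open>4/3 \<le> \<sigma>\<close> \<open>1 \<le> M\<close> by simp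
  ultimately have "0 < \<beta>" "\<beta> \<le> 1"
    unfolding \<beta>_def using c1 by simp_all
  then have \<beta>: "0 < \<beta>" "\<beta> \<le> p - 1"
    using p by auto
  have "0 < 2 * p\<^sup>2 * M"
    using \<open>1 \<le> M\<close> p by auto
  have "\<beta> * (ln ((p - 1) / \<beta>) + 1 + c2 * s / 2) \<le> \<beta> * (\<sigma> * M)"
    using parameter_ineq[OF p c1 c2] \<beta>(1) \<open>c1 \<le> \<sigma> * M\<close> c1
    unfolding \<beta>_def s_def \<sigma>_def M_def by (intro mult_left_mono) (auto simp: field_simps)
  also have "\<dots> = c1"
    unfolding \<beta>_def using \<open>4/3 \<le> \<sigma>\<close> \<open>1 \<le> M\<close> by simp
  finally have "c2 * s / 2 * \<beta> * real r \<le> ln (2 / \<epsilon>)"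
    using rank_le_of_tradeoff[OF _ _ _ \<beta> \<open>0 < \<epsilon>\<close> _ tradeoff[folded s_def]] c1 p by auto
  also have "\<dots> \<le> ln (3 / \<epsilon>)"
    using \<open>0 < \<epsilon>\<close> by (simp add: divide_right_mono)
  also have "c2 * s / 2 * \<beta> * real r = real r * (c1 * c2 * pi\<^sup>2) / (2 * p\<^sup>2 * M)"
    using \<open>s \<noteq> 0\<close> \<open>1 \<le> M\<close> p unfolding \<beta>_def \<sigma>_def by (simp add: field_simps)
  finally have "real r * (c1 * c2 * pi\<^sup>2) \<le> ln (3 / \<epsilon>) * (2 * p\<^sup>2 * M)"
    by (simp only: pos_divide_le_eq[OF \<open>0 < 2 * p\<^sup>2 * M\<close>])
  then have "real r \<le> ln (3 / \<epsilon>) * (2 * p\<^sup>2 * M) / (c1 * c2 * pi\<^sup>2)"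
    using c1 c2 by (simp add: pos_le_divide_eq)
  then show ?thesis
    unfolding M_def[symmetric] by (simp add: field_simps)
qed

theorem corollary2p4:
  fixes D1 D2 :: "'p::prime_card mod_ring pmf"
    and c1 c2 \<epsilon> :: real
    and n1 n2 :: nat
    and B :: "'p mod_ring mat"
    and t :: "'p mod_ring"
  assumes "CARD('p) \<ge> 3"
    and "0 < c1" "c1 \<le> 1/2" "0 < c2" "c2 \<le> 1/2"
    and "\<And>x. pmf D1 x \<le> 1 - c1"
    and "\<And>x. pmf D2 x \<le> 1 - c2"
    and "\<epsilon> > 0"
    and "n1 > 0" "n2 > 0"
    and "B \<in> carrier_mat n1 n2"
    and "t \<noteq> 0"
    and "norm (bias t D1 D2 B) \<ge> \<epsilon>"
  shows "real (bil_rank B) \<le>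
    2 / (c1 * c2 * pi\<^sup>2) * (real CARD('p))\<^sup>2
      * ln (2 * exp 1 * real CARD('p) / c1) * ln (3 / \<epsilon>)"
proof -
  obtain J where J: "J \<subseteq> {..<n2}" "card J = bil_rank B"
      "lin_indep_family {..<n1} J (\<lambda>j i. B $$ (i, j))"
    using vec_space.exists_lin_indep_cols_card_rank[OF assms(11)] assms(11)
    unfolding bil_rank_def by auto
  have "\<epsilon> \<le> exp (- (c2 * (1 - cos (2 * pi / real CARD('p))) / 2) * \<kappa>)
      + la powr (-\<kappa>) * (1 - c1) ^ bil_rank B * (1 + (real CARD('p) - 1) * la) ^ bil_rank B"
    if "0 < la" "la \<le> 1" for \<kappa> la
    using norm_bias_le_tradeoff[OF assms(11,12,6,7) _ J(1,3) that, of \<kappa>] assms(4,13) J(2)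
    by simp
  moreover have "real CARD('p) = 3 \<or> real CARD('p) \<ge> 4"
    using assms(1) by auto
  ultimately show ?thesis
    using rank_le_of_tradeoff_explicit[OF _ assms(2-5,8)] by blast
qed

end
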